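(* Let $\varepsilon>0$, $W(x)=(x^2-1)^2$, and let $u(t)$ be the solution of the graph Allen–Cahn equation $$\dot u_i=-(\Delta u)_i-\frac1\varepsilon d_i^{-r}W'(u_i)\quad(i\in V,\ t>0)$$ with arbitrary initial condition $u(0)=u_0\in\mathcal V$. Let $\mathcal S=\{u\in\mathcal V:\|u\|_{\mathcal V}^2\le\frac{17}{4}n\,d_+^r\}$. Then $t\mapsto\|u(t)\|_{\mathcal V}^2$ is strictly decreasing at every $t$ with $u(t)\notin\mathcal S$. Consequently $\mathcal S$ is positively invariant, and every trajectory enters $\mathcal S$ in finite time.
   Context: $G=(V,E)$ is a finite undirected weighted graph with $n$ nodes $V=\{1,\dots,n\}$. The weights satisfy $\omega_{ij}=\omega_{ji}\ge0$, with $\omega_{ij}>0$ iff $\{i,j\}\in E$, and $\omega_{ii}=0$. The degrees are $d_i=\sum_j\omega_{ij}>0$, and $d_+=\max_id_i$. A parameter $r\in[0,1]$ is fixed. $\mathcal V$ is the space of functions $V\to\mathbb R$ with $\langle u,v\rangle_{\mathcal V}=\sum_iu_iv_id_i^r$ and $\|u\|_{\mathcal V}=\sqrt{\langle u,u\rangle_{\mathcal V}}$. The graph Laplacian is $(\Delta u)_i=d_i^{-r}\sum_j\omega_{ij}(u_i-u_j)$. *)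

theory Defs
  imports "HOL-Analysis.Analysis"
begin

definition degree :: "('a::finite \<Rightarrow> 'a \<Rightarrow> real) \<Rightarrow> 'a \<Rightarrow> real" where
  "degree w i = (\<Sum>j\<in>UNIV. w i j)"

definition max_degree :: "('a::finite \<Rightarrow> 'a \<Rightarrow> real) \<Rightarrow> real" where
  "max_degree w = Max (range (degree w))"

definition vinner :: "('a::finite \<Rightarrow> 'a \<Rightarrow> real) \<Rightarrow> real \<Rightarrow> ('a \<Rightarrow> real) \<Rightarrow> ('a \<Rightarrow> real) \<Rightarrow> real" where
  "vinner w r u v = (\<Sum>i\<in>UNIV. u i * v i * degree w i powr r)"

definition vnorm :: "('a::finite \<Rightarrow> 'a \<Rightarrow> real) \<Rightarrow> real \<Rightarrow> ('a \<Rightarrow> real) \<Rightarrow> real" where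
  "vnorm w r u = sqrt (vinner w r u u)"

definition graph_laplacian :: "('a::finite \<Rightarrow> 'a \<Rightarrow> real) \<Rightarrow> real \<Rightarrow> ('a \<Rightarrow> real) \<Rightarrow> 'a \<Rightarrow> real" where
  "graph_laplacian w r u i = degree w i powr (- r) * (\<Sum>j\<in>UNIV. w i j * (u i - u j))"

definition dw_potential :: "real \<Rightarrow> real" where
  "dw_potential x = (x\<^sup>2 - 1)\<^sup>2"

definition absorbing_set :: "('a::finite \<Rightarrow> 'a \<Rightarrow> real) \<Rightarrow> real \<Rightarrow> ('a \<Rightarrow> real) set" where
  "absorbing_set w r = {u. (vnorm w r u)\<^sup>2 \<le> 17 / 4 * real CARD('a) * max_degree w powr r}"

definition strictly_decreasing_at :: "(real \<Rightarrow> real) \<Rightarrow> real \<Rightarrow> bool" where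
  "strictly_decreasing_at f t \<longleftrightarrow>
     (\<exists>\<delta>>0. (\<forall>s. t < s \<and> s < t + \<delta> \<longrightarrow> f s < f t) \<and>
             (\<forall>s. t - \<delta> < s \<and> s < t \<longrightarrow> f t < f s))"

end

theory Submission
  imports Defs
begin

text \<open>
  Along the flow, \<open>d/dt \<parallel>u\<parallel>\<^sup>2 = -2\<langle>u, \<Delta>u\<rangle> - (8/\<epsilon>) \<Sum>\<^sub>i (u\<^sub>i\<^sup>4 - u\<^sub>i\<^sup>2)\<close>: the weight \<open>d\<^sub>i\<^sup>-\<^sup>r\<close> in
  front of \<open>W'\<close> cancels against the weight \<open>d\<^sub>i\<^sup>r\<close> of the inner product. The Laplacian term is
  nonpositive, and \<open>x\<^sup>4 - x\<^sup>2 \<ge> 2x\<^sup>2 - 9/4\<close> shows that the quartic sum is at least 1 as soon as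
  \<open>\<Sum> u\<^sub>i\<^sup>2 > 17n/4\<close>, which holds outside \<open>\<S>\<close> because \<open>\<parallel>u\<parallel>\<^sup>2 \<le> d\<^sub>+\<^sup>r \<Sum> u\<^sub>i\<^sup>2\<close>. Hence the squared
  norm decays at rate at least \<open>8/\<epsilon>\<close> outside \<open>\<S>\<close>, and the three claims follow from the mean
  value theorem.
\<close>

definition allen_cahn_field ::
    "('a::finite \<Rightarrow> 'a \<Rightarrow> real) \<Rightarrow> real \<Rightarrow> real \<Rightarrow> ('a \<Rightarrow> real) \<Rightarrow> 'a \<Rightarrow> real" where
  "allen_cahn_field w r \<epsilon> v i =
     - graph_laplacian w r v i - (1 / \<epsilon>) * degree w i powr (- r) * deriv dw_potential (v i)"

lemma deriv_dw_potential: "deriv dw_potential x = 4 * x * (x\<^sup>2 - 1)"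
proof -
  have "(dw_potential has_real_derivative 4 * x * (x\<^sup>2 - 1)) (at x)"
    unfolding dw_potential_def[abs_def]
    by (auto intro!: derivative_eq_intros simp: algebra_simps)
  then show ?thesis by (rule DERIV_imp_deriv)
qed

lemma vnorm_power2: "(vnorm w r v)\<^sup>2 = vinner w r v v"
  unfolding vnorm_def vinner_def by (intro real_sqrt_pow2 sum_nonneg) (auto simp: mult_nonneg_nonneg)

lemma vinner_self_le_max_degree:
  fixes w :: "'a::finite \<Rightarrow> 'a \<Rightarrow> real"
  assumes "\<And>i. degree w i > 0" and "r \<ge> 0"
  shows "vinner w r v v \<le> max_degree w powr r * (\<Sum>i\<in>UNIV. (v i)\<^sup>2)"
proof -
  have "v i * v i * degree w i powr r \<le> (v i)\<^sup>2 * max_degree w powr r" for i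
  proof -
    have "degree w i \<le> max_degree w"
      unfolding max_degree_def by (rule Max_ge) auto
    then have "degree w i powr r \<le> max_degree w powr r"
      using assms by (intro powr_mono2) (auto intro: less_imp_le)
    then show ?thesis by (simp add: power2_eq_square mult_left_mono)
  qed
  then show ?thesis
    unfolding vinner_def by (simp add: sum_distrib_left mult.commute sum_mono)
qed

lemma max_degree_pos:
  fixes w :: "'a::finite \<Rightarrow> 'a \<Rightarrow> real"
  assumes "\<And>i. degree w i > 0"
  shows "max_degree w > 0"
proof -
  have "degree w undefined \<le> max_degree w"
    unfolding max_degree_def by (rule Max_ge) auto
  then show ?thesis using assms[of undefined] by linarith
qed

lemma laplacian_form_eq_dirichlet:
  fixes w :: "'a::finite \<Rightarrow> 'a \<Rightarrow> real"
  assumes "\<And>i j. w i j = w j i"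
  shows "2 * (\<Sum>i\<in>UNIV. v i * (\<Sum>j\<in>UNIV. w i j * (v i - v j)))
           = (\<Sum>i\<in>UNIV. \<Sum>j\<in>UNIV. w i j * (v i - v j)\<^sup>2)"
proof -
  let ?S = "\<Sum>i\<in>UNIV. v i * (\<Sum>j\<in>UNIV. w i j * (v i - v j))"
  have S: "?S = (\<Sum>i\<in>UNIV. \<Sum>j\<in>UNIV. w i j * v i * (v i - v j))"
    by (simp add: sum_distrib_left algebra_simps)
  also have "\<dots> = (\<Sum>i\<in>UNIV. \<Sum>j\<in>UNIV. w i j * v j * (v j - v i))"
    by (subst sum.swap) (simp add: assms)
  finally have "2 * ?S = (\<Sum>i\<in>UNIV. \<Sum>j\<in>UNIV.
                           w i j * v i * (v i - v j) + w i j * v j * (v j - v i))"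
    using S by (simp add: sum.distrib)
  also have "\<dots> = (\<Sum>i\<in>UNIV. \<Sum>j\<in>UNIV. w i j * (v i - v j)\<^sup>2)"
    by (simp add: power2_eq_square algebra_simps)
  finally show ?thesis .
qed

lemma vinner_laplacian_nonneg:
  fixes w :: "'a::finite \<Rightarrow> 'a \<Rightarrow> real"
  assumes "\<And>i j. w i j = w j i" and "\<And>i j. w i j \<ge> 0" and "\<And>i. degree w i > 0"
  shows "vinner w r v (graph_laplacian w r v) \<ge> 0"
proof -
  have "v i * graph_laplacian w r v i * degree w i powr r = v i * (\<Sum>j\<in>UNIV. w i j * (v i - v j))"
    for i
  proof -
    have "degree w i powr (- r) * degree w i powr r = 1"
      using assms(3)[of i] by (simp add: powr_minus)
    then show ?thesis
      unfolding graph_laplacian_def by (metis (no_types, lifting) mult.assoc mult.commute mult_1)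
  qed
  then have "vinner w r v (graph_laplacian w r v) = (\<Sum>i\<in>UNIV. v i * (\<Sum>j\<in>UNIV. w i j * (v i - v j)))"
    unfolding vinner_def by (rule sum.cong[OF refl])
  moreover have "(\<Sum>i\<in>UNIV. \<Sum>j\<in>UNIV. w i j * (v i - v j)\<^sup>2) \<ge> 0"
    using assms(2) by (intro sum_nonneg mult_nonneg_nonneg) auto
  ultimately show ?thesis
    using laplacian_form_eq_dirichlet[of w v, OF assms(1)] by simp
qed

lemma vinner_allen_cahn_field:
  fixes w :: "'a::finite \<Rightarrow> 'a \<Rightarrow> real"
  assumes "\<And>i. degree w i > 0"
  shows "vinner w r v (allen_cahn_field w r \<epsilon> v)
           = - vinner w r v (graph_laplacian w r v) - 4 / \<epsilon> * (\<Sum>i\<in>UNIV. (v i) ^ 4 - (v i)\<^sup>2)"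
proof -
  have "v i * allen_cahn_field w r \<epsilon> v i * degree w i powr r
          = - (v i * graph_laplacian w r v i * degree w i powr r) - 4 / \<epsilon> * ((v i) ^ 4 - (v i)\<^sup>2)"
    for i
  proof -
    have "degree w i powr (- r) * degree w i powr r = 1"
      using assms[of i] by (simp add: powr_minus)
    then show ?thesis
      unfolding allen_cahn_field_def deriv_dw_potential
      by (simp add: algebra_simps power2_eq_square power4_eq_xxxx)
  qed
  then have "vinner w r v (allen_cahn_field w r \<epsilon> v) = (\<Sum>i\<in>UNIV.
      - (v i * graph_laplacian w r v i * degree w i powr r) - 4 / \<epsilon> * ((v i) ^ 4 - (v i)\<^sup>2))"
    unfolding vinner_def by (rule sum.cong[OF refl])
  also have "\<dots> = - vinner w r v (graph_laplacian w r v) - 4 / \<epsilon> * (\<Sum>i\<in>UNIV. (v i) ^ 4 - (v i)\<^sup>2)"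
    unfolding vinner_def sum_distrib_left by (simp only: sum_subtractf sum_negf)
  finally show ?thesis .
qed

lemma quartic_sum_ge_one:
  fixes v :: "'a::finite \<Rightarrow> real"
  assumes "(\<Sum>i\<in>UNIV. (v i)\<^sup>2) > 17 / 4 * real CARD('a)"
  shows "(\<Sum>i\<in>UNIV. (v i) ^ 4 - (v i)\<^sup>2) \<ge> 1"
proof -
  have "(\<Sum>i\<in>UNIV. 2 * (v i)\<^sup>2 - 9 / 4) \<le> (\<Sum>i\<in>UNIV. (v i) ^ 4 - (v i)\<^sup>2)"
  proof (rule sum_mono)
    fix i
    show "2 * (v i)\<^sup>2 - 9 / 4 \<le> (v i) ^ 4 - (v i)\<^sup>2"
      using zero_le_power2[of "(v i)\<^sup>2 - 3 / 2"]
      by (simp add: power2_eq_square power4_eq_xxxx algebra_simps)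
  qed
  moreover have "(\<Sum>i\<in>UNIV. 2 * (v i)\<^sup>2 - 9 / 4) = 2 * (\<Sum>i\<in>UNIV. (v i)\<^sup>2) - 9 / 4 * real CARD('a)"
    by (simp add: sum_subtractf sum_distrib_left)
  moreover have "real CARD('a) \<ge> 1" by (simp add: Suc_le_eq)
  ultimately show ?thesis using assms by linarith
qed

lemma allen_cahn_dissipation_outside:
  fixes w :: "'a::finite \<Rightarrow> 'a \<Rightarrow> real"
  assumes "\<And>i j. w i j = w j i" and "\<And>i j. w i j \<ge> 0" and deg_pos: "\<And>i. degree w i > 0"
    and "r \<ge> 0" and "\<epsilon> > 0"
    and outside: "vinner w r v v > 17 / 4 * real CARD('a) * max_degree w powr r"
  shows "2 * vinner w r v (allen_cahn_field w r \<epsilon> v) \<le> - (8 / \<epsilon>)"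
proof -
  have "max_degree w powr r * (17 / 4 * real CARD('a)) < max_degree w powr r * (\<Sum>i\<in>UNIV. (v i)\<^sup>2)"
    using outside vinner_self_le_max_degree[OF deg_pos \<open>r \<ge> 0\<close>, of v] by (simp add: mult.commute)
  then have "(\<Sum>i\<in>UNIV. (v i) ^ 4 - (v i)\<^sup>2) \<ge> 1"
    using max_degree_pos[OF deg_pos] by (intro quartic_sum_ge_one) simp
  then have "4 / \<epsilon> \<le> 4 / \<epsilon> * (\<Sum>i\<in>UNIV. (v i) ^ 4 - (v i)\<^sup>2)"
    using \<open>\<epsilon> > 0\<close> mult_left_mono[of 1 _ "4 / \<epsilon>"] by simp
  then show ?thesis
    using vinner_allen_cahn_field[OF deg_pos, of r v \<epsilon>] vinner_laplacian_nonneg[OF assms(1-3), of r v]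
    by simp
qed

lemma has_derivative_vinner_self:
  assumes "\<And>i. ((\<lambda>s. u s i) has_real_derivative u' i) (at t)"
  shows "((\<lambda>s. vinner w r (u s) (u s)) has_real_derivative 2 * vinner w r (u t) u') (at t)"
proof -
  have "((\<lambda>s. \<Sum>i\<in>UNIV. u s i * u s i * degree w i powr r) has_real_derivative
          (\<Sum>i\<in>UNIV. 2 * (u t i * u' i * degree w i powr r))) (at t)"
    by (rule DERIV_sum, (rule derivative_eq_intros assms refl)+) (simp add: algebra_simps)
  then show ?thesis
    unfolding vinner_def by (simp add: sum_distrib_left)
qed

locale dissipative_above_level =
  fixes E E' :: "real \<Rightarrow> real" and c \<kappa> :: real
  assumes cont: "continuous_on {0..} E"
    and deriv: "\<And>t. t > 0 \<Longrightarrow> (E has_real_derivative E' t) (at t)"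
    and decay: "\<And>t. t > 0 \<Longrightarrow> E t > c \<Longrightarrow> E' t \<le> - \<kappa>"
    and rate_pos: "\<kappa> > 0"
begin

lemma decreases_while_above:
  assumes "0 \<le> a" "a < b" and above: "\<And>z. a < z \<Longrightarrow> z < b \<Longrightarrow> E z > c"
  shows "E b \<le> E a - \<kappa> * (b - a)"
proof -
  have "continuous_on {a..b} E" using cont by (rule continuous_on_subset) (use assms(1) in auto)
  moreover have "E differentiable (at x)" if "a < x" "x < b" for x
    using deriv[of x] that assms(1) real_differentiable_def by auto
  ultimately obtain l z where z: "a < z" "z < b" "DERIV E z :> l" "E b - E a = (b - a) * l"
    using MVT[OF assms(2)] by blast
  have "l = E' z" using DERIV_unique[OF z(3) deriv[of z]] z assms by auto
  then have "l \<le> - \<kappa>" using decay[of z] above[of z] z assms by auto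
  then have "(b - a) * l \<le> (b - a) * (- \<kappa>)" using assms by (intro mult_left_mono) auto
  then show ?thesis using z by (simp add: algebra_simps)
qed

lemma strictly_decreasing_at_above:
  assumes "t > 0" "E t > c"
  shows "strictly_decreasing_at E t"
proof -
  have neg: "E' t < 0" using decay[OF assms] rate_pos by linarith
  obtain d1 where d1: "d1 > 0" "\<forall>h>0. h < d1 \<longrightarrow> E t > E (t + h)"
    using DERIV_neg_dec_right[OF deriv[OF assms(1)] neg] by blast
  obtain d2 where d2: "d2 > 0" "\<forall>h>0. h < d2 \<longrightarrow> E t < E (t - h)"
    using DERIV_neg_dec_left[OF deriv[OF assms(1)] neg] by blast
  show ?thesis
    unfolding strictly_decreasing_at_def
  proof (intro exI[of _ "min d1 d2"] conjI allI impI)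
    fix s assume "t < s \<and> s < t + min d1 d2"
    then show "E s < E t" using d1(2)[rule_format, of "s - t"] by auto
  next
    fix s assume "t - min d1 d2 < s \<and> s < t"
    then show "E t < E s" using d2(2)[rule_format, of "t - s"] by auto
  qed (use d1 d2 in simp)
qed

lemma sublevel_invariant:
  assumes "0 \<le> t0" "E t0 \<le> c" "t0 \<le> t"
  shows "E t \<le> c"
proof (rule ccontr)
  assume "\<not> E t \<le> c"
  then have Et: "E t > c" by simp
  let ?K = "{x \<in> {t0..t}. E x \<le> c}"
  have "closed ?K"
    by (rule continuous_on_closed_Collect_le)
      (use cont assms(1) in \<open>auto intro: continuous_on_subset continuous_intros\<close>)
  then have "compact ?K"
    by (auto simp: compact_eq_bounded_closed intro: bounded_subset[OF bounded_closed_interval])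
  moreover have "t0 \<in> ?K" using assms by auto
  ultimately obtain s where s: "s \<in> ?K" "\<forall>y\<in>?K. y \<le> s"
    using compact_attains_sup[of ?K] by blast
  \<comment> \<open>\<open>s\<close> is the last time in \<open>[t0, t]\<close> at or below the level, so \<open>E\<close> stays above it on \<open>(s, t)\<close>.\<close>
  have "s < t" using s Et by (cases "s = t") auto
  moreover have "E z > c" if "s < z" "z < t" for z
    using s(2)[rule_format, of z] that s(1) by force
  ultimately have "E t \<le> E s - \<kappa> * (t - s)"
    using decreases_while_above[of s t] s assms(1) by auto
  moreover have "\<kappa> * (t - s) > 0" using rate_pos \<open>s < t\<close> by simp
  ultimately show False using s Et by auto
qed

lemma reaches_sublevel:
  assumes bounded_below: "\<And>t. t \<ge> 0 \<Longrightarrow> E t \<ge> m"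
  shows "\<exists>T\<ge>0. E T \<le> c"
proof (rule ccontr)
  assume "\<not> ?thesis"
  then have above: "\<And>T. T \<ge> 0 \<Longrightarrow> E T > c" by force
  define b where "b = max 1 ((E 0 - m) / \<kappa> + 1)"
  have "b > 0" unfolding b_def by simp
  then have "E b \<le> E 0 - \<kappa> * b" using decreases_while_above[of 0 b] above by auto
  moreover have "\<kappa> * b \<ge> E 0 - m + \<kappa>"
    using rate_pos unfolding b_def by (simp add: field_simps max_def)
  ultimately have "E b < m" using rate_pos by linarith
  with bounded_below \<open>b > 0\<close> show False by (meson less_imp_le not_le)
qed

end

theorem mainTheorem16:
  fixes w :: "'a::finite \<Rightarrow> 'a \<Rightarrow> real"
    and r \<epsilon> :: real
    and u :: "real \<Rightarrow> 'a \<Rightarrow> real"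
    and u0 :: "'a \<Rightarrow> real"
  assumes w_sym: "\<And>i j. w i j = w j i"
    and w_nonneg: "\<And>i j. w i j \<ge> 0"
    and w_diag: "\<And>i. w i i = 0"
    and deg_pos: "\<And>i. degree w i > 0"
    and r: "0 \<le> r" "r \<le> 1"
    and eps: "\<epsilon> > 0"
    and init: "u 0 = u0"
    and cont: "\<And>i. continuous_on {0..} (\<lambda>t. u t i)"
    and ode: "\<And>t i. t > 0 \<Longrightarrow>
       ((\<lambda>s. u s i) has_real_derivative
          (- graph_laplacian w r (u t) i
           - (1 / \<epsilon>) * degree w i powr (- r) * deriv dw_potential (u t i))) (at t)"
  shows "(\<forall>t>0. u t \<notin> absorbing_set w r \<longrightarrow>
            strictly_decreasing_at (\<lambda>s. (vnorm w r (u s))\<^sup>2) t)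
       \<and> (\<forall>t0\<ge>0. u t0 \<in> absorbing_set w r \<longrightarrow> (\<forall>t\<ge>t0. u t \<in> absorbing_set w r))
       \<and> (\<exists>T\<ge>0. u T \<in> absorbing_set w r)"
proof -
  define E where "E s = (vnorm w r (u s))\<^sup>2" for s
  define c where "c = 17 / 4 * real CARD('a) * max_degree w powr r"
  have absorbing_iff: "u s \<in> absorbing_set w r \<longleftrightarrow> E s \<le> c" for s
    unfolding absorbing_set_def E_def c_def by simp
  interpret dissipative_above_level E "\<lambda>t. 2 * vinner w r (u t) (allen_cahn_field w r \<epsilon> (u t))" c "8 / \<epsilon>"
  proof
    show "continuous_on {0..} E"
      unfolding E_def vnorm_power2 vinner_def by (intro continuous_intros cont)
    show "(E has_real_derivative 2 * vinner w r (u t) (allen_cahn_field w r \<epsilon> (u t))) (at t)"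
      if "t > 0" for t
      unfolding E_def[abs_def] vnorm_power2
      by (rule has_derivative_vinner_self) (unfold allen_cahn_field_def, rule ode[OF that])
    show "2 * vinner w r (u t) (allen_cahn_field w r \<epsilon> (u t)) \<le> - (8 / \<epsilon>)" if "E t > c" for t
      using that unfolding E_def c_def vnorm_power2
      by (rule allen_cahn_dissipation_outside[OF w_sym w_nonneg deg_pos r(1) eps])
    show "8 / \<epsilon> > 0" using eps by simp
  qed
  have "E t \<ge> 0" for t unfolding E_def by simp
  then have "\<exists>T\<ge>0. E T \<le> c" by (rule reaches_sublevel)
  moreover have "strictly_decreasing_at E t" if "t > 0" "\<not> E t \<le> c" for t
    using strictly_decreasing_at_above that by simp
  ultimately show ?thesis
    using sublevel_invariant unfolding absorbing_iff E_def[symmetric] by blast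
qed

end
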